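(* Let $P\neq Q$ be points in $\mathbb{R}^3$ and let $\gamma:[0,T)\times[0,1]\to\mathbb{R}^3$ be a sufficiently smooth family of curves with $|\gamma_u|_g\neq0$ everywhere, $\gamma(0,\cdot)$ a regular horizontal curve from $P$ to $Q$, $\gamma(t,0)=P$, $\gamma(t,1)=Q$ for all $t$, and $$\gamma_t(t,u)=\vec k_g(t,u)+\lambda(t)N(t,u)-\Big(\int_0^u(k(t,\xi)+\lambda(t))|\gamma_u(t,\xi)|_gd\xi\Big)X_3(\gamma(t,u))$$ for $(t,u)\in(0,T)\times(0,1)$, where $\lambda(t)=-\frac{\int_0^1k(t,u)|\gamma_u(t,u)|_gdu}{L(\gamma(t))}$. Then $t\mapsto L(\gamma(t))$ is nonincreasing.
   Context: Write $\gamma=(\gamma^1,\gamma^2,\gamma^3)^t$. $|\gamma_u|_g=\sqrt{(\gamma^1_u)^2+(\gamma^2_u)^2}$ and $L(\gamma)=\int_0^1|\gamma_u|_gdu$. A curve is horizontal if $\gamma^3_u=-\tfrac12\gamma^2\gamma^1_u+\tfrac12\gamma^1\gamma^2_u$. $X_3=(0,0,1)^t$. $k=\frac{\gamma^2_{uu}\gamma^1_u-\gamma^2_u\gamma^1_{uu}}{((\gamma^1_u)^2+(\gamma^2_u)^2)^{3/2}}$, $N=\frac1{|\gamma_u|_g}\big(-\gamma^2_u,\ \gamma^1_u,\ \tfrac12\gamma^2\gamma^2_u+\tfrac12\gamma^1\gamma^1_u\big)^t$, and $\vec k_g=kN$. *)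

theory Defs
  imports "HOL-Analysis.Analysis"
begin

definition gnorm :: "real^3 \<Rightarrow> real" where
  "gnorm v = sqrt ((v$1)^2 + (v$2)^2)"

definition cderiv :: "(real \<Rightarrow> real^3) \<Rightarrow> real \<Rightarrow> real^3" where
  "cderiv c u = vector_derivative c (at u within {0..1})"

definition Lg :: "(real \<Rightarrow> real^3) \<Rightarrow> real" where
  "Lg c = integral {0..1} (\<lambda>u. gnorm (cderiv c u))"

definition horizontal :: "(real \<Rightarrow> real^3) \<Rightarrow> bool" where
  "horizontal c \<longleftrightarrow> (\<forall>u\<in>{0..1}. c differentiable (at u within {0..1}) \<and>
      (cderiv c u)$3 = - (1/2) * (c u)$2 * (cderiv c u)$1 + (1/2) * (c u)$1 * (cderiv c u)$2)"

definition regular_curve :: "(real \<Rightarrow> real^3) \<Rightarrow> bool" where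
  "regular_curve c \<longleftrightarrow> (\<forall>u\<in>{0..1}. c differentiable (at u within {0..1}) \<and> cderiv c u \<noteq> 0)"

definition X3 :: "real^3" where
  "X3 = vector [0, 0, 1]"

text \<open>Curvature k from the first and second u-derivatives v = gamma_u, a = gamma_uu.\<close>
definition kcurv :: "real^3 \<Rightarrow> real^3 \<Rightarrow> real" where
  "kcurv v a = (a$2 * v$1 - v$2 * a$1) / ((v$1)^2 + (v$2)^2) powr (3/2)"

text \<open>Normal N at point p with tangent v = gamma_u.\<close>
definition Nvec :: "real^3 \<Rightarrow> real^3 \<Rightarrow> real^3" where
  "Nvec p v = (1 / gnorm v) *\<^sub>R vector [- v$2, v$1, (1/2) * p$2 * v$2 + (1/2) * p$1 * v$1]"

definition kgvec :: "real^3 \<Rightarrow> real^3 \<Rightarrow> real^3 \<Rightarrow> real^3" where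
  "kgvec p v a = kcurv v a *\<^sub>R Nvec p v"

end

theory Submission
  imports Defs
begin

text \<open>The horizontal part of \<open>\<gamma>\<^sub>t\<close> is \<open>(k + \<lambda>)\<close> times the horizontal unit normal, so it is
  orthogonal to \<open>\<gamma>\<^sub>u\<close> in the first two coordinates. Differentiating this orthogonality in \<open>u\<close>
  gives \<open>\<langle>\<gamma>\<^sub>u, \<gamma>\<^sub>u\<^sub>t\<rangle> = -\<langle>\<gamma>\<^sub>u\<^sub>u, \<gamma>\<^sub>t\<rangle> = -(k + \<lambda>) k |\<gamma>\<^sub>u|\<^sub>g\<^sup>2\<close>, hence the first variation
  of length is \<open>-\<integral> (k + \<lambda>) k |\<gamma>\<^sub>u|\<^sub>g du\<close>. Since \<open>-\<lambda>\<close> is the \<open>|\<gamma>\<^sub>u|\<^sub>g\<close>-weighted mean of \<open>k\<close>,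
  this equals \<open>-\<integral> (k + \<lambda>)\<^sup>2 |\<gamma>\<^sub>u|\<^sub>g du \<le> 0\<close>.\<close>

definition hinner :: "real^3 \<Rightarrow> real^3 \<Rightarrow> real" where
  "hinner v w = v$1 * w$1 + v$2 * w$2"

lemma gnorm_eq_sqrt_hinner: "gnorm v = sqrt (hinner v v)"
  unfolding gnorm_def hinner_def by (simp add: power2_eq_square)

lemma hinner_commute: "hinner v w = hinner w v"
  by (simp add: hinner_def mult.commute)

lemma gnorm_nonneg: "0 \<le> gnorm v"
  by (simp add: gnorm_def)

lemma kcurv_eq_div_gnorm_cube: "kcurv v a = (a$2 * v$1 - v$2 * a$1) / gnorm v ^ 3"
proof -
  have "S powr (3/2) = sqrt S ^ 3" if "S \<ge> 0" for S :: real
  proof (cases "S = 0")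
    case False
    with that have "sqrt S ^ 3 = (S powr (1/2)) powr 3"
      by (simp add: powr_half_sqrt powr_realpow)
    then show ?thesis by (simp add: powr_powr)
  qed simp
  then show ?thesis
    unfolding kcurv_def gnorm_def by simp
qed

lemma hinner_Nvec: "hinner w (Nvec p v) = (w$2 * v$1 - v$2 * w$1) / gnorm v"
  unfolding hinner_def Nvec_def by (simp add: diff_divide_distrib algebra_simps)

lemma hinner_tangent_Nvec: "hinner v (Nvec p v) = 0"
  by (simp add: hinner_Nvec)

lemma hinner_Nvec_eq_kcurv: "hinner a (Nvec p v) = kcurv v a * gnorm v ^ 2"
  by (cases "gnorm v = 0")
    (simp_all add: hinner_Nvec kcurv_eq_div_gnorm_cube power3_eq_cube power2_eq_square)

lemma hinner_flow_velocity:
  "hinner w (kgvec p v a + \<mu> *\<^sub>R Nvec p v - r *\<^sub>R X3) = (kcurv v a + \<mu>) * hinner w (Nvec p v)"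
  unfolding hinner_def kgvec_def X3_def by (simp add: algebra_simps)

lemma has_vector_derivative_vec_nth:
  "(f has_vector_derivative f') F \<Longrightarrow> ((\<lambda>x. f x $ i) has_real_derivative f' $ i) F"
  using bounded_linear.has_vector_derivative[OF bounded_linear_vec_nth]
  by (simp add: has_real_derivative_iff_has_vector_derivative)

lemma has_real_derivative_hinner:
  assumes "(f has_vector_derivative f') (at x within S)"
    and "(g has_vector_derivative g') (at x within S)"
  shows "((\<lambda>x. hinner (f x) (g x)) has_real_derivative hinner f' (g x) + hinner (f x) g')
    (at x within S)"
  unfolding hinner_def
  using has_vector_derivative_vec_nth[OF assms(1)] has_vector_derivative_vec_nth[OF assms(2)]
  by (auto intro!: derivative_eq_intros simp: algebra_simps)

lemma has_real_derivative_gnorm: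
  assumes f: "(f has_vector_derivative f') (at x within S)" and nz: "gnorm (f x) \<noteq> 0"
  shows "((\<lambda>x. gnorm (f x)) has_real_derivative hinner (f x) f' / gnorm (f x)) (at x within S)"
proof -
  have "hinner (f x) (f x) \<ge> 0" "hinner (f x) (f x) \<noteq> 0"
    using nz by (simp_all add: gnorm_eq_sqrt_hinner hinner_def)
  then have pos: "hinner (f x) (f x) > 0"
    by linarith
  have "((\<lambda>x. sqrt (hinner (f x) (f x))) has_real_derivative
      inverse (sqrt (hinner (f x) (f x))) / 2 * (hinner f' (f x) + hinner (f x) f')) (at x within S)"
    by (rule DERIV_chain2[OF DERIV_real_sqrt[OF pos] has_real_derivative_hinner[OF f f]])
  moreover have "inverse (sqrt (hinner (f x) (f x))) / 2 * (hinner f' (f x) + hinner (f x) f')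
      = hinner (f x) f' / gnorm (f x)"
    using pos by (simp add: gnorm_eq_sqrt_hinner hinner_commute field_simps)
  ultimately show ?thesis
    by (simp add: gnorm_eq_sqrt_hinner)
qed

lemma has_real_derivative_eq_0_if_vanishing:
  assumes "(f has_real_derivative D) (at x within S)"
    and "open U" "x \<in> U" "U \<subseteq> S" "\<And>y. y \<in> U \<Longrightarrow> f y = 0"
  shows "D = 0"
proof -
  have "(f has_real_derivative D) (at x)"
    using assms(1-4) by (metis at_within_open_subset)
  then have "((\<lambda>y. 0) has_real_derivative D) (at x)"
    using assms(2,3,5) by (rule has_field_derivative_transform_within_open)
  then show ?thesis
    using DERIV_const DERIV_unique by blast
qed

lemma continuous_on_section:
  assumes "continuous_on (A \<times> B) (\<lambda>(t, u). F t u)" "t \<in> A"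
  shows "continuous_on B (F t)"
  using continuous_on_compose2[OF assms(1) continuous_on_Pair[OF continuous_on_const continuous_on_id]]
    assms(2) by auto

lemma Lg_eq_integral:
  assumes "\<And>u. u \<in> {0..1} \<Longrightarrow> (c has_vector_derivative c' u) (at u within {0..1})"
  shows "Lg c = integral {0..1} (\<lambda>u. gnorm (c' u))"
  unfolding Lg_def cderiv_def
  by (rule integral_cong) (simp add: vector_derivative_within_closed_interval[OF _ _ assms])

lemma weighted_variance_nonneg:
  fixes K G :: "'a::euclidean_space \<Rightarrow> real"
  assumes G: "G integrable_on S" and KG: "(\<lambda>x. K x * G x) integrable_on S"
    and K2G: "(\<lambda>x. K x ^ 2 * G x) integrable_on S"
    and nonneg: "\<And>x. x \<in> S \<Longrightarrow> 0 \<le> G x"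
  defines "c \<equiv> integral S (\<lambda>x. K x * G x) / integral S G"
  shows "0 \<le> integral S (\<lambda>x. (K x - c) * K x * G x)"
proof -
  define L B Q where "L = integral S G" and "B = integral S (\<lambda>x. K x * G x)"
    and "Q = integral S (\<lambda>x. K x ^ 2 * G x)"
  have square: "(\<lambda>x. (K x - c)^2 * G x) = (\<lambda>x. K x ^ 2 * G x - 2 * c * (K x * G x) + c^2 * G x)"
    by (simp add: fun_eq_iff power2_eq_square algebra_simps)
  have "(\<lambda>x. K x ^ 2 * G x - 2 * c * (K x * G x) + c^2 * G x) integrable_on S"
    by (intro integrable_add integrable_diff integrable_on_mult_right G KG K2G)
  then have "0 \<le> integral S (\<lambda>x. (K x - c)^2 * G x)"
    by (intro integral_nonneg) (auto simp only: square nonneg zero_le_power2 mult_nonneg_nonneg)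
  also have "\<dots> = integral S (\<lambda>x. K x ^ 2 * G x - 2 * c * (K x * G x) + c^2 * G x)"
    by (simp only: square)
  also have "\<dots> = Q - 2 * c * B + c^2 * L"
    unfolding L_def B_def Q_def
    by (intro integral_unique has_integral_add has_integral_diff has_integral_mult_right
          integrable_integral G KG K2G)
  \<comment> \<open>\<open>c * B = c\<^sup>2 * L\<close> also when \<open>L = 0\<close>, since then \<open>c = 0\<close>.\<close>
  also have "\<dots> = Q - c * B"
    unfolding c_def L_def[symmetric] B_def[symmetric] by (cases "L = 0") (simp_all add: power2_eq_square)
  also have "\<dots> = integral S (\<lambda>x. (K x - c) * K x * G x)"
  proof -
    have "(\<lambda>x. (K x - c) * K x * G x) = (\<lambda>x. K x ^ 2 * G x - c * (K x * G x))"
      by (simp add: power2_eq_square algebra_simps)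
    then show ?thesis
      unfolding B_def Q_def
      by (simp only:) (intro integral_unique [symmetric] has_integral_diff has_integral_mult_right
          integrable_integral KG K2G)
  qed
  finally show ?thesis .
qed

lemma nonincreasing_if_has_real_derivative_nonpos:
  fixes f f' :: "real \<Rightarrow> real"
  assumes deriv: "\<And>t. t \<in> {a..<b} \<Longrightarrow> (f has_real_derivative f' t) (at t within {a..<b})"
    and nonpos: "\<And>t. t \<in> {a<..<b} \<Longrightarrow> f' t \<le> 0"
    and st: "s \<in> {a..<b}" "t \<in> {a..<b}" "s \<le> t"
  shows "f t \<le> f s"
proof (rule DERIV_nonpos_imp_decreasing_open[OF st(3)])
  fix x assume "s < x" "x < t"
  then have x: "x \<in> {a<..<b}" using st by auto
  moreover have "at x within {a..<b} = at x"
    by (rule at_within_open_subset[OF x]) auto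
  ultimately have "(f has_real_derivative f' x) (at x)"
    using deriv[of x] by auto
  then show "\<exists>y. (f has_real_derivative y) (at x) \<and> y \<le> 0"
    using nonpos[OF x] by blast
next
  have "continuous_on {a..<b} f"
    using deriv by (metis DERIV_continuous continuous_on_eq_continuous_within)
  then show "continuous_on {s..t} f"
    by (rule continuous_on_subset) (use st in auto)
qed

lemma has_real_derivative_integral_gnorm:
  fixes \<gamma>u \<gamma>ut :: "real \<Rightarrow> real \<Rightarrow> real^3"
  assumes I: "convex I" "t \<in> I"
    and deriv: "\<And>t u. t \<in> I \<Longrightarrow> u \<in> {0..1} \<Longrightarrow>
      ((\<lambda>t. \<gamma>u t u) has_vector_derivative \<gamma>ut t u) (at t within I)"
    and cont: "continuous_on (I \<times> {0..1}) (\<lambda>(t, u). \<gamma>u t u)"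
      "continuous_on (I \<times> {0..1}) (\<lambda>(t, u). \<gamma>ut t u)"
    and nz: "\<And>t u. t \<in> I \<Longrightarrow> u \<in> {0..1} \<Longrightarrow> gnorm (\<gamma>u t u) \<noteq> 0"
  shows "((\<lambda>t. integral {0..1} (\<lambda>u. gnorm (\<gamma>u t u))) has_real_derivative
      integral {0..1} (\<lambda>u. hinner (\<gamma>u t u) (\<gamma>ut t u) / gnorm (\<gamma>u t u))) (at t within I)"
proof -
  have "continuous_on (I \<times> {0..1}) (\<lambda>(t, u). hinner (\<gamma>u t u) (\<gamma>ut t u) / gnorm (\<gamma>u t u))"
    using cont nz unfolding hinner_def gnorm_def split_beta
    by (auto intro!: continuous_intros)
  moreover have "(\<lambda>u. gnorm (\<gamma>u s u)) integrable_on {0..1}" if "s \<in> I" for s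
    using continuous_on_section[OF cont(1) that] unfolding gnorm_def
    by (auto intro!: integrable_continuous_interval continuous_intros)
  ultimately show ?thesis
    using I has_real_derivative_gnorm[OF deriv nz]
    by (intro leibniz_rule_field_derivative[of I 0 1 _
          "\<lambda>t u. hinner (\<gamma>u t u) (\<gamma>ut t u) / gnorm (\<gamma>u t u)", unfolded cbox_interval]) auto
qed

lemma flow_speed_variation:
  fixes c cu cuu ct :: "real \<Rightarrow> real^3" and r :: "real \<Rightarrow> real"
  assumes u: "u \<in> {0<..<1}"
    and d_cu: "(cu has_vector_derivative cuu u) (at u within {0..1})"
    and d_ct: "(ct has_vector_derivative ctu) (at u within {0..1})"
    and flow: "\<And>v. v \<in> {0<..<1} \<Longrightarrow>
      ct v = kgvec (c v) (cu v) (cuu v) + \<mu> *\<^sub>R Nvec (c v) (cu v) - r v *\<^sub>R X3"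
  shows "hinner (cu u) ctu / gnorm (cu u)
    = - ((kcurv (cu u) (cuu u) + \<mu>) * kcurv (cu u) (cuu u) * gnorm (cu u))"
proof -
  have orth: "hinner (cu v) (ct v) = 0" if "v \<in> {0<..<1}" for v
    by (simp add: flow[OF that] hinner_flow_velocity hinner_tangent_Nvec)
  have "hinner (cuu u) (ct u) + hinner (cu u) ctu = 0"
    by (rule has_real_derivative_eq_0_if_vanishing[OF has_real_derivative_hinner[OF d_cu d_ct]
          open_greaterThanLessThan u _ orth]) auto
  moreover have "hinner (cuu u) (ct u)
      = (kcurv (cu u) (cuu u) + \<mu>) * kcurv (cu u) (cuu u) * gnorm (cu u) ^ 2"
    by (simp add: flow[OF u] hinner_flow_velocity hinner_Nvec_eq_kcurv)
  ultimately have "hinner (cu u) ctu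
      = - ((kcurv (cu u) (cuu u) + \<mu>) * kcurv (cu u) (cuu u) * gnorm (cu u) ^ 2)"
    by linarith
  then show ?thesis
    by (cases "gnorm (cu u) = 0") (simp_all add: power2_eq_square)
qed

lemma flow_length_variation_nonpos:
  fixes c cu cuu ct ctu :: "real \<Rightarrow> real^3" and r :: "real \<Rightarrow> real"
  assumes d_c: "\<And>u. u \<in> {0..1} \<Longrightarrow> (c has_vector_derivative cu u) (at u within {0..1})"
    and d_cu: "\<And>u. u \<in> {0..1} \<Longrightarrow> (cu has_vector_derivative cuu u) (at u within {0..1})"
    and d_ct: "\<And>u. u \<in> {0..1} \<Longrightarrow> (ct has_vector_derivative ctu u) (at u within {0..1})"
    and cont_cuu: "continuous_on {0..1} cuu"
    and nz: "\<And>u. u \<in> {0..1} \<Longrightarrow> gnorm (cu u) \<noteq> 0"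
    and \<mu>: "\<mu> = - integral {0..1} (\<lambda>u. kcurv (cu u) (cuu u) * gnorm (cu u)) / Lg c"
    and flow: "\<And>u. u \<in> {0<..<1} \<Longrightarrow>
      ct u = kgvec (c u) (cu u) (cuu u) + \<mu> *\<^sub>R Nvec (c u) (cu u) - r u *\<^sub>R X3"
  shows "integral {0..1} (\<lambda>u. hinner (cu u) (ctu u) / gnorm (cu u)) \<le> 0"
proof -
  define K G where "K u = kcurv (cu u) (cuu u)" and "G u = gnorm (cu u)" for u
  have "continuous_on {0..1} cu"
    using d_cu by (metis continuous_on_eq_continuous_within has_vector_derivative_continuous)
  then have cont_G: "continuous_on {0..1} G" and cont_K: "continuous_on {0..1} K"
    using cont_cuu nz unfolding G_def K_def kcurv_eq_div_gnorm_cube gnorm_def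
    by (auto intro!: continuous_intros)
  have "integral {0..1} (\<lambda>u. hinner (cu u) (ctu u) / gnorm (cu u))
      = integral {0..1} (\<lambda>u. - ((K u + \<mu>) * K u * G u))"
    using flow_speed_variation[OF _ d_cu d_ct flow] unfolding K_def G_def
    by (intro integral_spike[where S = "{0, 1}"]) auto
  also have "\<dots> = - integral {0..1}
      (\<lambda>u. (K u - integral {0..1} (\<lambda>u. K u * G u) / integral {0..1} G) * K u * G u)"
    using \<mu> Lg_eq_integral[OF d_c] unfolding K_def G_def by (simp add: integral_neg)
  also have "\<dots> \<le> 0"
    unfolding neg_le_0_iff_le
    by (intro weighted_variance_nonneg integrable_continuous_interval continuous_intros cont_G cont_K)
      (simp add: G_def gnorm_nonneg)
  finally show ?thesis .
qed

theorem lemmaB3: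
  fixes P Q :: "real^3" and T :: real
    and \<gamma> \<gamma>u \<gamma>uu \<gamma>t \<gamma>ut :: "real \<Rightarrow> real \<Rightarrow> real^3"
  assumes PQ: "P \<noteq> Q"
    and d_u: "\<And>t u. t \<in> {0..<T} \<Longrightarrow> u \<in> {0..1} \<Longrightarrow>
               ((\<lambda>u. \<gamma> t u) has_vector_derivative \<gamma>u t u) (at u within {0..1})"
    and d_uu: "\<And>t u. t \<in> {0..<T} \<Longrightarrow> u \<in> {0..1} \<Longrightarrow>
               ((\<lambda>u. \<gamma>u t u) has_vector_derivative \<gamma>uu t u) (at u within {0..1})"
    and d_t: "\<And>t u. t \<in> {0..<T} \<Longrightarrow> u \<in> {0..1} \<Longrightarrow>
               ((\<lambda>t. \<gamma> t u) has_vector_derivative \<gamma>t t u) (at t within {0..<T})"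
    and d_ut: "\<And>t u. t \<in> {0..<T} \<Longrightarrow> u \<in> {0..1} \<Longrightarrow>
               ((\<lambda>t. \<gamma>u t u) has_vector_derivative \<gamma>ut t u) (at t within {0..<T})"
    and d_tu: "\<And>t u. t \<in> {0..<T} \<Longrightarrow> u \<in> {0..1} \<Longrightarrow>
               ((\<lambda>u. \<gamma>t t u) has_vector_derivative \<gamma>ut t u) (at u within {0..1})"
    and c0: "continuous_on ({0..<T} \<times> {0..1}) (\<lambda>(t, u). \<gamma> t u)"
    and c1: "continuous_on ({0..<T} \<times> {0..1}) (\<lambda>(t, u). \<gamma>u t u)"
    and c2: "continuous_on ({0..<T} \<times> {0..1}) (\<lambda>(t, u). \<gamma>uu t u)"
    and c3: "continuous_on ({0..<T} \<times> {0..1}) (\<lambda>(t, u). \<gamma>t t u)"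
    and c4: "continuous_on ({0..<T} \<times> {0..1}) (\<lambda>(t, u). \<gamma>ut t u)"
    and nondeg: "\<And>t u. t \<in> {0..<T} \<Longrightarrow> u \<in> {0..1} \<Longrightarrow> gnorm (\<gamma>u t u) \<noteq> 0"
    and init_reg: "regular_curve (\<gamma> 0)"
    and init_hor: "horizontal (\<gamma> 0)"
    and bdry: "\<And>t. t \<in> {0..<T} \<Longrightarrow> \<gamma> t 0 = P \<and> \<gamma> t 1 = Q"
    and flow: "\<And>t u. t \<in> {0<..<T} \<Longrightarrow> u \<in> {0<..<1} \<Longrightarrow>
       (let lam = - integral {0..1} (\<lambda>u. kcurv (\<gamma>u t u) (\<gamma>uu t u) * gnorm (\<gamma>u t u)) / Lg (\<gamma> t)
        in \<gamma>t t u = kgvec (\<gamma> t u) (\<gamma>u t u) (\<gamma>uu t u) + lam *\<^sub>R Nvec (\<gamma> t u) (\<gamma>u t u)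
             - integral {0..u} (\<lambda>\<xi>. (kcurv (\<gamma>u t \<xi>) (\<gamma>uu t \<xi>) + lam) * gnorm (\<gamma>u t \<xi>)) *\<^sub>R X3)"
  shows "\<forall>s\<in>{0..<T}. \<forall>t\<in>{0..<T}. s \<le> t \<longrightarrow> Lg (\<gamma> t) \<le> Lg (\<gamma> s)"
proof -
  \<comment> \<open>Only the flow equation and the hypotheses on \<open>\<gamma>\<^sub>u\<close>, \<open>\<gamma>\<^sub>u\<^sub>u\<close>, \<open>\<gamma>\<^sub>u\<^sub>t\<close> are used.\<close>
  define L where "L t = integral {0..1} (\<lambda>u. gnorm (\<gamma>u t u))" for t
  define L' where "L' t = integral {0..1} (\<lambda>u. hinner (\<gamma>u t u) (\<gamma>ut t u) / gnorm (\<gamma>u t u))" for t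
  have "(L has_real_derivative L' t) (at t within {0..<T})" if "t \<in> {0..<T}" for t
    unfolding L_def L'_def
    by (rule has_real_derivative_integral_gnorm[OF _ that d_ut c1 c4 nondeg]) auto
  moreover have "L' t \<le> 0" if t: "t \<in> {0<..<T}" for t
    unfolding L'_def
    by (rule flow_length_variation_nonpos[OF d_u d_uu d_tu continuous_on_section[OF c2] nondeg refl
          flow[OF t, unfolded Let_def]]) (use t in auto)
  moreover have "Lg (\<gamma> t) = L t" if "t \<in> {0..<T}" for t
    unfolding L_def using d_u[OF that] by (rule Lg_eq_integral)
  ultimately show ?thesis
    by (metis nonincreasing_if_has_real_derivative_nonpos)
qed

end
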